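(* If $H$ is a minimal $Q$-triconnected graph, then the contracted version of $H$ is also a minimal $Q$-triconnected graph.
   Context: Two vertices are triconnected if there are three internally vertex-disjoint paths between them. $H$ is $Q$-triconnected if every pair of vertices of $Q$ is triconnected in $H$; it is minimal if deleting any edge or vertex violates this. The contracted version of $H$ is obtained by contracting edges incident to vertices of degree two until no vertex of degree two remains, so that every maximal path of $H$ whose internal vertices have degree two becomes a single edge (the resulting graph may have parallel edges). *)

theory Defs
  imports Main
begin

text \<open>Finite multigraphs (parallel edges and loops representable).  An edge e has
  end vertices ends e = (x, y), read as an unordered pair.\<close>

record ('v, 'e) mgraph =
  verts :: "'v set"
  edgs  :: "'e set"
  ends  :: "'e \<Rightarrow> 'v \<times> 'v"

definition wf_mgraph :: "('v, 'e) mgraph \<Rightarrow> bool" where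
  "wf_mgraph G \<longleftrightarrow> finite (verts G) \<and> finite (edgs G) \<and>
     (\<forall>e \<in> edgs G. fst (ends G e) \<in> verts G \<and> snd (ends G e) \<in> verts G)"

definition simple_mgraph :: "('v, 'e) mgraph \<Rightarrow> bool" where
  "simple_mgraph G \<longleftrightarrow>
     (\<forall>e \<in> edgs G. fst (ends G e) \<noteq> snd (ends G e)) \<and>
     (\<forall>e1 \<in> edgs G. \<forall>e2 \<in> edgs G. e1 \<noteq> e2 \<longrightarrow>
        {fst (ends G e1), snd (ends G e1)} \<noteq> {fst (ends G e2), snd (ends G e2)})"

text \<open>Degree (a loop counts twice).\<close>
definition degree :: "('v, 'e) mgraph \<Rightarrow> 'v \<Rightarrow> nat" where
  "degree G v = card {e \<in> edgs G. fst (ends G e) = v} + card {e \<in> edgs G. snd (ends G e) = v}"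

definition joins :: "('v, 'e) mgraph \<Rightarrow> 'e \<Rightarrow> 'v \<Rightarrow> 'v \<Rightarrow> bool" where
  "joins G e x y \<longleftrightarrow> e \<in> edgs G \<and> (ends G e = (x, y) \<or> ends G e = (y, x))"

definition is_path :: "('v, 'e) mgraph \<Rightarrow> 'v \<Rightarrow> 'v \<Rightarrow> 'v list \<Rightarrow> 'e list \<Rightarrow> bool" where
  "is_path G u v vs es \<longleftrightarrow>
     length vs = Suc (length es) \<and> set vs \<subseteq> verts G \<and> distinct vs \<and>
     hd vs = u \<and> last vs = v \<and>
     (\<forall>i < length es. joins G (es ! i) (vs ! i) (vs ! Suc i))"

definition internal :: "'v list \<Rightarrow> 'v set" where
  "internal vs = set (butlast (tl vs))"

definition triconnected :: "('v, 'e) mgraph \<Rightarrow> 'v \<Rightarrow> 'v \<Rightarrow> bool" where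
  "triconnected G u v \<longleftrightarrow>
     (\<exists>vs1 es1 vs2 es2 vs3 es3.
        is_path G u v vs1 es1 \<and> is_path G u v vs2 es2 \<and> is_path G u v vs3 es3 \<and>
        es1 \<noteq> es2 \<and> es1 \<noteq> es3 \<and> es2 \<noteq> es3 \<and>
        internal vs1 \<inter> internal vs2 = {} \<and> internal vs1 \<inter> internal vs3 = {} \<and>
        internal vs2 \<inter> internal vs3 = {})"

definition Q_triconnected :: "('v, 'e) mgraph \<Rightarrow> 'v set \<Rightarrow> bool" where
  "Q_triconnected G Q \<longleftrightarrow> Q \<subseteq> verts G \<and>
     (\<forall>u \<in> Q. \<forall>v \<in> Q. u \<noteq> v \<longrightarrow> triconnected G u v)"

definition del_edge :: "('v, 'e) mgraph \<Rightarrow> 'e \<Rightarrow> ('v, 'e) mgraph" where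
  "del_edge G e = G\<lparr>edgs := edgs G - {e}\<rparr>"

definition del_vertex :: "('v, 'e) mgraph \<Rightarrow> 'v \<Rightarrow> ('v, 'e) mgraph" where
  "del_vertex G x = G\<lparr>verts := verts G - {x},
     edgs := {e \<in> edgs G. fst (ends G e) \<noteq> x \<and> snd (ends G e) \<noteq> x}\<rparr>"

definition minimal_Q_triconnected :: "('v, 'e) mgraph \<Rightarrow> 'v set \<Rightarrow> bool" where
  "minimal_Q_triconnected G Q \<longleftrightarrow> Q_triconnected G Q \<and>
     (\<forall>e \<in> edgs G. \<not> Q_triconnected (del_edge G e) Q) \<and>
     (\<forall>x \<in> verts G. \<not> Q_triconnected (del_vertex G x) Q)"

text \<open>One contraction step: a vertex v of degree two with its two (distinct, non-loop)
  incident edges e1 = vu and e2 = vw; contracting e2 merges v into w, so that e1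
  becomes an edge uw (possibly parallel to an existing edge, or a loop if u = w).\<close>
definition contract_step :: "('v, 'e) mgraph \<Rightarrow> ('v, 'e) mgraph \<Rightarrow> bool" where
  "contract_step G G' \<longleftrightarrow>
     (\<exists>v u w e1 e2. v \<in> verts G \<and> degree G v = 2 \<and> e1 \<noteq> e2 \<and>
        u \<noteq> v \<and> w \<noteq> v \<and> joins G e1 v u \<and> joins G e2 v w \<and>
        G' = \<lparr>verts = verts G - {v}, edgs = edgs G - {e2},
              ends = (ends G)(e1 := (u, w))\<rparr>)"

definition contracted_version :: "('v, 'e) mgraph \<Rightarrow> ('v, 'e) mgraph \<Rightarrow> bool" where
  "contracted_version H H' \<longleftrightarrow> contract_step\<^sup>*\<^sup>* H H' \<and>
     (\<forall>v \<in> verts H'. degree H' v \<noteq> 2)"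

end

theory Submission
  imports Defs
begin

text \<open>Let v be a vertex of degree two with edges e1 = vu and e2 = vw, and let G' be the
  contraction that removes v and e2 and re-attaches e1 as an edge uw.  Three paths leaving v
  would have to share a first edge, so v is triconnected to nothing; as a minimal
  Q-triconnected graph has two terminals, v is not in Q.  Hence of three internally
  disjoint s-t paths (s, t in Q) at most one passes through v, and shortcutting it along
  the new edge uw shows that G' is Q-triconnected.  Conversely, if deleting an edge or a
  vertex of G' left it Q-triconnected, subdividing uw again by v would turn three internally
  disjoint paths into such paths of the same deletion in G: at most one of them uses uw,
  since an edge shared by two internally disjoint s-t paths joins s and t directly.  This
  contradicts the minimality of G.\<close>

fun is_walk :: "('v, 'e) mgraph \<Rightarrow> 'v list \<Rightarrow> 'e list \<Rightarrow> bool" where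
  "is_walk G [x] [] = True"
| "is_walk G (x # y # vs) (e # es) \<longleftrightarrow> joins G e x y \<and> is_walk G (y # vs) es"
| "is_walk G _ _ = False"

lemma is_walk_singleton [simp]: "is_walk G [x] es \<longleftrightarrow> es = []"
  by (cases es) auto

lemma is_walk_Cons_Nil [simp]: "is_walk G (x # vs) [] \<longleftrightarrow> vs = []"
  by (cases vs) auto

lemma is_walk_Cons_Cons: "is_walk G (x # vs) (e # es) \<longleftrightarrow> vs \<noteq> [] \<and> joins G e x (hd vs) \<and> is_walk G vs es"
  by (cases vs) auto

lemma is_walk_iff:
  "is_walk G vs es \<longleftrightarrow> length vs = Suc (length es) \<and> (\<forall>i < length es. joins G (es ! i) (vs ! i) (vs ! Suc i))"
  by (induction G vs es rule: is_walk.induct) (auto simp: less_Suc_eq_0_disj)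

lemma is_path_iff_walk:
  "is_path G s t vs es \<longleftrightarrow> is_walk G vs es \<and> set vs \<subseteq> verts G \<and> distinct vs \<and> hd vs = s \<and> last vs = t"
  by (auto simp: is_path_def is_walk_iff)

lemma is_walk_append:
  "is_walk G (xs @ [a]) es1 \<Longrightarrow> is_walk G (a # ys) es2 \<Longrightarrow> is_walk G (xs @ a # ys) (es1 @ es2)"
proof (induction xs arbitrary: es1)
  case (Cons x xs)
  then obtain e es where "es1 = e # es" by (cases es1) auto
  with Cons show ?case by (auto simp: is_walk_Cons_Cons hd_append)
qed simp

lemma is_walk_split_vertex:
  "is_walk G (xs @ a # ys) es \<Longrightarrow> \<exists>es1 es2. es = es1 @ es2 \<and> is_walk G (xs @ [a]) es1 \<and> is_walk G (a # ys) es2"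
proof (induction xs arbitrary: es)
  case Nil
  then show ?case by (intro exI[of _ "[]"] exI[of _ es]) auto
next
  case (Cons x xs)
  then obtain e es' where es: "es = e # es'" by (cases es) auto
  with Cons.prems have "joins G e x (hd (xs @ a # ys))" "is_walk G (xs @ a # ys) es'"
    by (auto simp: is_walk_Cons_Cons)
  with Cons.IH obtain es1 es2 where "es' = es1 @ es2" "is_walk G (xs @ [a]) es1" "is_walk G (a # ys) es2"
    by blast
  with \<open>joins G e x (hd (xs @ a # ys))\<close> es show ?case
    by (intro exI[of _ "e # es1"] exI[of _ es2]) (auto simp: is_walk_Cons_Cons hd_append)
qed

lemma is_walk_split_edge:
  "is_walk G vs (es1 @ e # es2) \<Longrightarrow>
     \<exists>xs a b ys. vs = xs @ a # b # ys \<and> is_walk G (xs @ [a]) es1 \<and> joins G e a b \<and> is_walk G (b # ys) es2"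
proof (induction es1 arbitrary: vs)
  case Nil
  then obtain a r where vs: "vs = a # r" by (cases vs) auto
  with Nil obtain b ys where "r = b # ys" by (cases r) auto
  with vs Nil show ?case by (intro exI[of _ "[]"]) auto
next
  case (Cons e' es1)
  then obtain x r where vs: "vs = x # r" by (cases vs) auto
  with Cons.prems have r: "r \<noteq> []" "joins G e' x (hd r)" "is_walk G r (es1 @ e # es2)"
    by (auto simp: is_walk_Cons_Cons)
  from Cons.IH[OF r(3)] obtain xs a b ys where
    "r = xs @ a # b # ys" "is_walk G (xs @ [a]) es1" "joins G e a b" "is_walk G (b # ys) es2"
    by blast
  with vs r show ?case by (intro exI[of _ "x # xs"]) (auto simp: is_walk_Cons_Cons hd_append)
qed

lemma is_walk_mono:
  "is_walk A vs es \<Longrightarrow>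
     (\<And>e x y. e \<in> set es \<Longrightarrow> x \<in> set vs \<Longrightarrow> y \<in> set vs \<Longrightarrow> joins A e x y \<Longrightarrow> joins B e x y) \<Longrightarrow>
     is_walk B vs es"
  by (induction A vs es rule: is_walk.induct) auto

lemma joins_sym: "joins G e x y \<Longrightarrow> joins G e y x"
  by (auto simp: joins_def)

lemma joins_in_edgs: "joins G e x y \<Longrightarrow> e \<in> edgs G"
  by (simp add: joins_def)

lemma joins_ends_unique: "joins G e x y \<Longrightarrow> joins G e x' y' \<Longrightarrow> (x' = x \<and> y' = y) \<or> (x' = y \<and> y' = x)"
  by (auto simp: joins_def)

lemma internal_subset_set: "internal vs \<subseteq> set vs"
  unfolding internal_def by (cases vs) (auto dest: in_set_butlastD)

lemma internal_insert_middle: "internal (xs @ a # v # b # ys) = insert v (internal (xs @ a # b # ys))"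
  by (cases xs) (auto simp: internal_def butlast_append)

lemma in_set_endpoint_or_internal: "x \<in> set vs \<Longrightarrow> x = hd vs \<or> x = last vs \<or> x \<in> internal vs"
  unfolding internal_def
  by (cases vs) (auto, metis append_butlast_last_id in_set_conv_decomp_last rotate1.simps(2) set_rotate1 set_ConsD)

lemma path_distinct_edges:
  assumes "is_path G s t vs es"
  shows "distinct es"
proof -
  from assms have len: "length vs = Suc (length es)" and dist: "distinct vs"
    and J: "\<And>i. i < length es \<Longrightarrow> joins G (es ! i) (vs ! i) (vs ! Suc i)"
    by (auto simp: is_path_def)
  have "es ! i \<noteq> es ! j" if ij: "i < j" "j < length es" for i j
  proof
    assume "es ! i = es ! j"
    moreover have "i < length es" using ij by simp
    ultimately have "vs ! i = vs ! j \<or> vs ! i = vs ! Suc j"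
      using J[of i] J[of j] ij(2) joins_ends_unique by metis
    with dist len ij show False by (simp add: nth_eq_iff_index_eq)
  qed
  then show ?thesis
    unfolding distinct_conv_nth by (metis linorder_neqE_nat)
qed

lemma distinct_hd_last_adjacent:
  assumes dist: "distinct (xs @ a # b # ys)"
    and hd: "hd (xs @ a # b # ys) = s" and last: "last (xs @ a # b # ys) = t"
    and ab: "(a = s \<and> b = t) \<or> (a = t \<and> b = s)"
  shows "xs = [] \<and> ys = [] \<and> a = s"
proof -
  have xs: "xs = []" if "hd (xs @ a # b # ys) \<in> {a, b}"
    using that dist by (cases xs) auto
  have ys: "ys = []" if "last (xs @ a # b # ys) \<in> {a, b}"
    using that dist by (cases ys rule: rev_cases) auto
  from hd last ab have "xs = []" "ys = []"
    by (auto intro: xs ys)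
  with hd show ?thesis by simp
qed

lemma path_edge_joins:
  assumes "is_path G s t vs es" "e \<in> set es"
  obtains a b where "joins G e a b" "a \<in> set vs" "b \<in> set vs" "a \<noteq> b"
proof -
  from assms(2) obtain i where i: "i < length es" "e = es ! i"
    by (metis in_set_conv_nth)
  with assms(1) have "joins G e (vs ! i) (vs ! Suc i)" "vs ! i \<in> set vs" "vs ! Suc i \<in> set vs"
    "vs ! i \<noteq> vs ! Suc i"
    by (auto simp: is_path_def nth_eq_iff_index_eq)
  then show ?thesis by (rule that)
qed

lemma path_edge_joining_ends:
  assumes P: "is_path G s t vs es" and e: "e \<in> set es" and st: "joins G e s t"
  shows "es = [e]"
proof -
  from e obtain es1 es2 where es: "es = es1 @ e # es2"
    by (meson split_list)
  with P obtain xs a b ys where vs: "vs = xs @ a # b # ys" and W1: "is_walk G (xs @ [a]) es1"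
    and jab: "joins G e a b" and W2: "is_walk G (b # ys) es2"
    using is_walk_split_edge by (metis is_path_iff_walk)
  from joins_ends_unique[OF st jab] P vs have "xs = [] \<and> ys = []"
    using distinct_hd_last_adjacent by (auto simp: is_path_iff_walk)
  with W1 W2 es show ?thesis by simp
qed

text \<open>The ends of an edge lying on two internally disjoint s-t paths must be s and t.\<close>
lemma internally_disjoint_paths_common_edge:
  assumes P1: "is_path G s t vs1 es1" and P2: "is_path G s t vs2 es2"
    and disj: "internal vs1 \<inter> internal vs2 = {}"
    and e: "e \<in> set es1" "e \<in> set es2"
  shows "es1 = es2"
proof -
  have on_both: "x \<in> {s, t}" if "x \<in> set vs1" "x \<in> set vs2" for x
    using in_set_endpoint_or_internal[OF that(1)] in_set_endpoint_or_internal[OF that(2)] P1 P2 disj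
    by (auto simp: is_path_iff_walk)
  obtain a b where jab: "joins G e a b" "a \<in> set vs1" "b \<in> set vs1" "a \<noteq> b"
    using path_edge_joins[OF P1 e(1)] .
  obtain a' b' where "joins G e a' b'" "a' \<in> set vs2" "b' \<in> set vs2"
    using path_edge_joins[OF P2 e(2)] .
  with jab have "a \<in> set vs2" "b \<in> set vs2"
    using joins_ends_unique by metis+
  with jab on_both have "a \<in> {s, t}" "b \<in> {s, t}"
    by auto
  with jab have "joins G e s t"
    using joins_sym by (metis empty_iff insert_iff)
  with P1 P2 e show ?thesis
    using path_edge_joining_ends by metis
qed

text \<open>Paths satisfying M are rerouted through x and e, the others are kept.  The edge e
  tells a rerouted path apart from a kept one, and two internally disjoint paths are never
  both rerouted, so three internally disjoint paths stay distinct and internally disjoint.\<close>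
lemma triconnected_transfer:
  assumes tri: "triconnected A s t"
    and keep: "\<And>vs es. is_path A s t vs es \<Longrightarrow> \<not> M vs es \<Longrightarrow>
      is_path B s t vs es \<and> x \<notin> internal vs \<and> e \<notin> set es"
    and reroute: "\<And>vs es. is_path A s t vs es \<Longrightarrow> M vs es \<Longrightarrow>
      \<exists>vs' es'. is_path B s t vs' es' \<and> internal vs' \<subseteq> insert x (internal vs) \<and> e \<in> set es'"
    and unique: "\<And>vs1 es1 vs2 es2. is_path A s t vs1 es1 \<Longrightarrow> is_path A s t vs2 es2 \<Longrightarrow>
      internal vs1 \<inter> internal vs2 = {} \<Longrightarrow> M vs1 es1 \<Longrightarrow> M vs2 es2 \<Longrightarrow> es1 = es2"
  shows "triconnected B s t"
proof -
  define moved where "moved vs es vs' es' \<longleftrightarrow> is_path B s t vs' es' \<and>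
      (if M vs es then internal vs' \<subseteq> insert x (internal vs) \<and> e \<in> set es'
       else vs' = vs \<and> es' = es \<and> x \<notin> internal vs \<and> e \<notin> set es)" for vs es vs' es'
  have move: "\<exists>vs' es'. moved vs es vs' es'" if "is_path A s t vs es" for vs es
    using keep[OF that] reroute[OF that] by (cases "M vs es") (auto simp: moved_def)
  have separated: "es1' \<noteq> es2' \<and> internal vs1' \<inter> internal vs2' = {}"
    if "is_path A s t vs1 es1" "is_path A s t vs2 es2" "es1 \<noteq> es2" "internal vs1 \<inter> internal vs2 = {}"
      "moved vs1 es1 vs1' es1'" "moved vs2 es2 vs2' es2'" for vs1 es1 vs2 es2 vs1' es1' vs2' es2'
    using that unique[OF that(1,2,4)] unfolding moved_def by (cases "M vs1 es1"; cases "M vs2 es2") auto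
  obtain vs1 es1 vs2 es2 vs3 es3 where P:
    "is_path A s t vs1 es1" "is_path A s t vs2 es2" "is_path A s t vs3 es3"
    "es1 \<noteq> es2" "es1 \<noteq> es3" "es2 \<noteq> es3"
    "internal vs1 \<inter> internal vs2 = {}" "internal vs1 \<inter> internal vs3 = {}"
    "internal vs2 \<inter> internal vs3 = {}"
    using tri unfolding triconnected_def by blast
  obtain vs1' es1' vs2' es2' vs3' es3' where
    M: "moved vs1 es1 vs1' es1'" "moved vs2 es2 vs2' es2'" "moved vs3 es3 vs3' es3'"
    using move[OF P(1)] move[OF P(2)] move[OF P(3)] by blast
  then have "is_path B s t vs1' es1'" "is_path B s t vs2' es2'" "is_path B s t vs3' es3'"
    by (simp_all add: moved_def)
  with separated[OF P(1,2,4,7) M(1,2)] separated[OF P(1,3,5,8) M(1,3)]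
    separated[OF P(2,3,6,9) M(2,3)] show ?thesis
    unfolding triconnected_def by blast
qed

text \<open>B contains A with the edge e1 = uw subdivided by the new vertex v into e1 = vu and e2 = vw.\<close>
locale edge_subdivision =
  fixes A B :: "('v, 'e) mgraph" and v u w :: 'v and e1 e2 :: 'e
  assumes verts_subset: "verts A \<subseteq> verts B" and v_in_B: "v \<in> verts B" and v_notin_A: "v \<notin> verts A"
    and kept: "\<And>e. e \<in> edgs A \<Longrightarrow> e \<noteq> e1 \<Longrightarrow> e \<in> edgs B \<and> ends B e = ends A e"
    and subdivided: "e1 \<in> edgs A \<Longrightarrow> ends A e1 = (u, w) \<and> joins B e1 v u \<and> joins B e2 v w"
    and e2_notin_A: "e2 \<notin> edgs A"
begin

lemma joins_kept: "joins A e x y \<Longrightarrow> e \<noteq> e1 \<Longrightarrow> joins B e x y"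
  using kept by (auto simp: joins_def)

lemma path_kept:
  assumes P: "is_path A s t vs es" and e1: "e1 \<notin> set es"
  shows "is_path B s t vs es \<and> v \<notin> internal vs \<and> e2 \<notin> set es"
proof -
  from P have "is_walk B vs es"
    unfolding is_path_iff_walk using e1 by (auto intro: is_walk_mono joins_kept)
  moreover have "e2 \<notin> set es"
    using P e2_notin_A path_edge_joins joins_in_edgs by metis
  moreover have "v \<notin> internal vs"
    using P v_notin_A internal_subset_set by (fastforce simp: is_path_iff_walk)
  ultimately show ?thesis
    using P verts_subset by (auto simp: is_path_iff_walk)
qed

lemma path_subdivided:
  assumes P: "is_path A s t vs es" and e1: "e1 \<in> set es"
  shows "\<exists>vs' es'. is_path B s t vs' es' \<and> internal vs' \<subseteq> insert v (internal vs) \<and> e2 \<in> set es'"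
proof -
  from P have W: "is_walk A vs es" and sv: "set vs \<subseteq> verts A" and dist: "distinct vs"
    and hd: "hd vs = s" and last: "last vs = t"
    by (auto simp: is_path_iff_walk)
  have v: "v \<notin> set vs" using sv v_notin_A by auto
  from e1 obtain es1 es2 where es: "es = es1 @ e1 # es2"
    by (meson split_list)
  have not_e1: "e1 \<notin> set es1" "e1 \<notin> set es2"
    using path_distinct_edges[OF P] es by auto
  from W es obtain xs a b ys where vs: "vs = xs @ a # b # ys" and W1: "is_walk A (xs @ [a]) es1"
    and jab: "joins A e1 a b" and W2: "is_walk A (b # ys) es2"
    using is_walk_split_edge by metis
  have W1': "is_walk B (xs @ [a]) es1" and W2': "is_walk B (b # ys) es2"
    using W1 W2 not_e1 by (auto intro: is_walk_mono joins_kept)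
  from subdivided[OF joins_in_edgs[OF jab]] have
    ab: "(a = u \<and> b = w) \<or> (a = w \<and> b = u)" and j1: "joins B e1 v u" and j2: "joins B e2 v w"
    using jab by (auto simp: joins_def)
  obtain ea eb where E: "joins B ea a v" "joins B eb v b" "e2 \<in> {ea, eb}"
  proof (cases "a = u")
    case True
    with ab that[of e1 e2] j1 j2 show ?thesis by (auto intro: joins_sym)
  next
    case False
    with ab that[of e2 e1] j1 j2 show ?thesis by (auto intro: joins_sym)
  qed
  have "is_walk B (xs @ a # v # b # ys) (es1 @ ea # eb # es2)"
    using W1' W2' E by (intro is_walk_append) auto
  moreover have "set (xs @ a # v # b # ys) \<subseteq> verts B" "distinct (xs @ a # v # b # ys)"
    using sv verts_subset v_in_B dist v vs by auto
  moreover have "hd (xs @ a # v # b # ys) = s" "last (xs @ a # v # b # ys) = t"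
    using hd last vs by (cases xs; simp)+
  moreover have "internal (xs @ a # v # b # ys) = insert v (internal vs)"
    using vs internal_insert_middle by simp
  ultimately show ?thesis
    using E(3) by (intro exI[of _ "xs @ a # v # b # ys"] exI[of _ "es1 @ ea # eb # es2"])
      (auto simp: is_path_iff_walk)
qed

lemma Q_triconnected_subdivided:
  assumes QA: "Q_triconnected A Q"
  shows "Q_triconnected B Q"
  unfolding Q_triconnected_def
proof (intro conjI ballI impI)
  show "Q \<subseteq> verts B" using QA verts_subset by (auto simp: Q_triconnected_def)
  fix s t assume "s \<in> Q" "t \<in> Q" "s \<noteq> t"
  with QA have "triconnected A s t" by (auto simp: Q_triconnected_def)
  then show "triconnected B s t"
  proof (rule triconnected_transfer[where M = "\<lambda>vs es. e1 \<in> set es"])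
    show "is_path B s t vs es \<and> v \<notin> internal vs \<and> e2 \<notin> set es"
      if "is_path A s t vs es" "e1 \<notin> set es" for vs es
      using that by (rule path_kept)
    show "\<exists>vs' es'. is_path B s t vs' es' \<and> internal vs' \<subseteq> insert v (internal vs) \<and> e2 \<in> set es'"
      if "is_path A s t vs es" "e1 \<in> set es" for vs es
      using that by (rule path_subdivided)
  qed (rule internally_disjoint_paths_common_edge)
qed

end

lemma minimal_Q_triconnected_two_terminals:
  assumes min: "minimal_Q_triconnected G Q" and e: "e \<in> edgs G"
  obtains s t where "s \<in> Q" "t \<in> Q" "s \<noteq> t"
proof -
  from min e have "\<not> Q_triconnected (del_edge G e) Q"
    by (simp add: minimal_Q_triconnected_def)
  moreover have "Q \<subseteq> verts (del_edge G e)"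
    using min by (auto simp: minimal_Q_triconnected_def Q_triconnected_def del_edge_def)
  ultimately show ?thesis
    using that by (auto simp: Q_triconnected_def)
qed

locale degree_two_vertex =
  fixes G :: "('v, 'e) mgraph" and v u w :: 'v and e1 e2 :: 'e
  assumes finite_edgs: "finite (edgs G)" and v_in_G: "v \<in> verts G" and degree_v: "degree G v = 2"
    and e1_ne_e2: "e1 \<noteq> e2" and u_ne_v: "u \<noteq> v" and w_ne_v: "w \<noteq> v"
    and e1: "joins G e1 v u" and e2: "joins G e2 v w"
begin

lemma incident_edges:
  assumes e: "e \<in> edgs G" "fst (ends G e) = v \<or> snd (ends G e) = v"
  shows "e = e1 \<or> e = e2"
proof (rule ccontr)
  assume ne: "\<not> (e = e1 \<or> e = e2)"
  define L where "L = {e \<in> edgs G. fst (ends G e) = v}"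
  define R where "R = {e \<in> edgs G. snd (ends G e) = v}"
  have fin: "finite L" "finite R"
    using finite_edgs by (auto simp: L_def R_def)
  have "3 = card {e1, e2, e}"
    using ne e1_ne_e2 by auto
  also have "\<dots> \<le> card (L \<union> R)"
    using e e1 e2 fin by (intro card_mono) (auto simp: joins_def L_def R_def)
  also have "\<dots> \<le> card L + card R"
    by (rule card_Un_le)
  also have "\<dots> = 2"
    using degree_v by (simp add: degree_def L_def R_def)
  finally show False by simp
qed

lemma joins_v_cases:
  assumes "joins G e x v"
  shows "(e = e1 \<and> x = u) \<or> (e = e2 \<and> x = w)"
proof -
  from assms have "e = e1 \<or> e = e2"
    by (intro incident_edges) (auto simp: joins_def)
  with assms e1 e2 u_ne_v w_ne_v show ?thesis
    by (auto simp: joins_def)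
qed

lemma path_from_v_first_edge:
  assumes "is_path G v t vs es" "t \<noteq> v"
  shows "es \<noteq> [] \<and> hd es \<in> {e1, e2}"
proof -
  from assms have es: "es \<noteq> []"
    by (cases vs) (auto simp: is_path_def)
  with assms have "joins G (es ! 0) (vs ! 0) (vs ! 1)" "vs \<noteq> []"
    by (auto simp: is_path_def)
  with assms es have "joins G (hd es) v (vs ! 1)"
    by (simp add: is_path_def hd_conv_nth)
  from joins_v_cases[OF joins_sym[OF this]] es show ?thesis
    by auto
qed

lemma not_triconnected_from_v:
  assumes "t \<noteq> v"
  shows "\<not> triconnected G v t"
proof
  assume "triconnected G v t"
  then obtain vs1 es1 vs2 es2 vs3 es3 where P:
    "is_path G v t vs1 es1" "is_path G v t vs2 es2" "is_path G v t vs3 es3"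
    "es1 \<noteq> es2" "es1 \<noteq> es3" "es2 \<noteq> es3"
    "internal vs1 \<inter> internal vs2 = {}" "internal vs1 \<inter> internal vs3 = {}"
    "internal vs2 \<inter> internal vs3 = {}"
    unfolding triconnected_def by blast
  have F: "es1 \<noteq> []" "es2 \<noteq> []" "es3 \<noteq> []" "hd es1 \<in> {e1, e2}" "hd es2 \<in> {e1, e2}" "hd es3 \<in> {e1, e2}"
    using path_from_v_first_edge[OF _ assms] P(1-3) by blast+
  then consider "hd es1 = hd es2" | "hd es1 = hd es3" | "hd es2 = hd es3"
    by auto
  then show False
  proof cases
    case 1
    with P(1,2,4,7) F show False using internally_disjoint_paths_common_edge hd_in_set by metis
  next
    case 2
    with P(1,3,5,8) F show False using internally_disjoint_paths_common_edge hd_in_set by metis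
  next
    case 3
    with P(2,3,6,9) F show False using internally_disjoint_paths_common_edge hd_in_set by metis
  qed
qed

definition contracted :: "('v, 'e) mgraph" where
  "contracted = \<lparr>verts = verts G - {v}, edgs = edgs G - {e2}, ends = (ends G)(e1 := (u, w))\<rparr>"

lemma contracted_simps [simp]:
  "verts contracted = verts G - {v}" "edgs contracted = edgs G - {e2}"
  "ends contracted = (ends G)(e1 := (u, w))"
  by (simp_all add: contracted_def)

lemma joins_contracted: "joins G e x y \<Longrightarrow> x \<noteq> v \<Longrightarrow> y \<noteq> v \<Longrightarrow> joins contracted e x y"
  using e1 e2 by (auto simp: joins_def)

lemma path_through_v:
  assumes P: "is_path G s t vs es" and v: "v \<in> set vs" "s \<noteq> v" "t \<noteq> v"
  obtains xs a b ys es1 es2 where "vs = xs @ a # v # b # ys"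
    "is_walk G (xs @ [a]) es1" "is_walk G (b # ys) es2" "(a = u \<and> b = w) \<or> (a = w \<and> b = u)"
proof -
  from P have W: "is_walk G vs es" and dist: "distinct vs" and hd: "hd vs = s" and last: "last vs = t"
    by (auto simp: is_path_iff_walk)
  obtain xs0 ys0 where vs0: "vs = xs0 @ v # ys0"
    using v(1) by (metis split_list)
  obtain xs a where xs0: "xs0 = xs @ [a]"
    using vs0 hd v(2) by (cases xs0 rule: rev_cases) auto
  obtain b ys where ys0: "ys0 = b # ys"
    using vs0 last v(3) by (cases ys0) auto
  have vs: "vs = xs @ a # (v # b # ys)"
    using vs0 xs0 ys0 by simp
  from is_walk_split_vertex[OF W[unfolded vs]] obtain es1 es' where
    W1: "is_walk G (xs @ [a]) es1" and W': "is_walk G (a # v # b # ys) es'"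
    by blast
  obtain ea r where r: "es' = ea # r"
    using W' by (cases es') auto
  with W' obtain eb es2 where "r = eb # es2"
    by (cases r) auto
  with W' r have "joins G ea a v" "joins G eb b v" and W2: "is_walk G (b # ys) es2"
    by (auto intro: joins_sym)
  moreover have "a \<noteq> b"
    using dist vs by auto
  ultimately have "(a = u \<and> b = w) \<or> (a = w \<and> b = u)"
    using joins_v_cases by blast
  with vs W1 W2 show ?thesis
    using that by simp
qed

lemma path_avoiding_v:
  assumes P: "is_path G s t vs es" and v: "v \<notin> set vs"
  shows "is_path contracted s t vs es \<and> v \<notin> internal vs \<and> e1 \<notin> set es"
proof -
  from P have W: "is_walk G vs es"
    by (simp add: is_path_iff_walk)
  have "is_walk contracted vs es"
    using v by (intro is_walk_mono[OF W] joins_contracted) auto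
  moreover have "e1 \<notin> set es"
  proof
    assume "e1 \<in> set es"
    then obtain a b where "joins G e1 a b" "a \<in> set vs" "b \<in> set vs"
      using path_edge_joins[OF P] by metis
    with joins_ends_unique[OF e1] v show False
      by blast
  qed
  moreover have "v \<notin> internal vs"
    using v internal_subset_set by fast
  ultimately show ?thesis
    using P v by (auto simp: is_path_iff_walk)
qed

lemma path_through_v_contracted:
  assumes P: "is_path G s t vs es" and v: "v \<in> set vs" "s \<noteq> v" "t \<noteq> v"
  shows "\<exists>vs' es'. is_path contracted s t vs' es' \<and> internal vs' \<subseteq> insert v (internal vs) \<and> e1 \<in> set es'"
proof -
  obtain xs a b ys es1 es2 where vs: "vs = xs @ a # v # b # ys"
    and W1: "is_walk G (xs @ [a]) es1" and W2: "is_walk G (b # ys) es2"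
    and ab: "(a = u \<and> b = w) \<or> (a = w \<and> b = u)"
    using path_through_v[OF assms] .
  from P vs have dist: "distinct (xs @ a # v # b # ys)" and sv: "set vs \<subseteq> verts G"
    and hd: "hd vs = s" and last: "last vs = t"
    by (auto simp: is_path_iff_walk)
  have "is_walk contracted (xs @ [a]) es1" "is_walk contracted (b # ys) es2"
    using dist by (intro is_walk_mono[OF W1] is_walk_mono[OF W2] joins_contracted; auto)+
  moreover have "joins contracted e1 a b"
    using ab e1 e1_ne_e2 by (auto simp: joins_def)
  ultimately have "is_walk contracted (xs @ a # b # ys) (es1 @ e1 # es2)"
    by (intro is_walk_append) auto
  moreover have "set (xs @ a # b # ys) \<subseteq> verts contracted" "distinct (xs @ a # b # ys)"
    using sv vs dist by auto
  moreover have "hd (xs @ a # b # ys) = s" "last (xs @ a # b # ys) = t"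
    using hd last vs by (cases xs; simp)+
  moreover have "internal vs = insert v (internal (xs @ a # b # ys))"
    using vs internal_insert_middle by simp
  ultimately show ?thesis
    by (intro exI[of _ "xs @ a # b # ys"] exI[of _ "es1 @ e1 # es2"]) (auto simp: is_path_iff_walk)
qed

lemma Q_triconnected_contracted:
  assumes QG: "Q_triconnected G Q" and vQ: "v \<notin> Q"
  shows "Q_triconnected contracted Q"
  unfolding Q_triconnected_def
proof (intro conjI ballI impI)
  show "Q \<subseteq> verts contracted" using QG vQ by (auto simp: Q_triconnected_def)
  fix s t assume st: "s \<in> Q" "t \<in> Q" "s \<noteq> t"
  with vQ have sv: "s \<noteq> v" "t \<noteq> v" by auto
  from QG st have "triconnected G s t" by (auto simp: Q_triconnected_def)
  then show "triconnected contracted s t"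
  proof (rule triconnected_transfer[where M = "\<lambda>vs es. v \<in> set vs"])
    show "is_path contracted s t vs es \<and> v \<notin> internal vs \<and> e1 \<notin> set es"
      if "is_path G s t vs es" "v \<notin> set vs" for vs es
      using that by (rule path_avoiding_v)
    show "\<exists>vs' es'. is_path contracted s t vs' es' \<and> internal vs' \<subseteq> insert v (internal vs) \<and> e1 \<in> set es'"
      if "is_path G s t vs es" "v \<in> set vs" for vs es
      using that sv by (rule path_through_v_contracted)
    show "es1 = es2"
      if "is_path G s t vs1 es1" "is_path G s t vs2 es2" "internal vs1 \<inter> internal vs2 = {}"
        "v \<in> set vs1" "v \<in> set vs2" for vs1 es1 vs2 es2
    proof -
      from that sv have "v \<in> internal vs1" "v \<in> internal vs2"
        using in_set_endpoint_or_internal by (fastforce simp: is_path_iff_walk)+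
      with that(3) show ?thesis by blast
    qed
  qed
qed

lemma edge_subdivision_del_edge:
  assumes "e \<noteq> e2"
  shows "edge_subdivision (del_edge contracted e) (del_edge G e) v u w e1 e2"
  using assms v_in_G e1 e2 by unfold_locales (auto simp: del_edge_def joins_def)

lemma edge_subdivision_del_vertex:
  assumes "x \<noteq> v"
  shows "edge_subdivision (del_vertex contracted x) (del_vertex G x) v u w e1 e2"
  using assms v_in_G e1 e2 by unfold_locales (auto simp: del_vertex_def joins_def)

lemma minimal_Q_triconnected_contracted:
  assumes min: "minimal_Q_triconnected G Q"
  shows "minimal_Q_triconnected contracted Q"
proof -
  have QG: "Q_triconnected G Q"
    using min by (simp add: minimal_Q_triconnected_def)
  have vQ: "v \<notin> Q"
  proof
    assume "v \<in> Q"
    obtain s t where "s \<in> Q" "t \<in> Q" "s \<noteq> t"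
      using minimal_Q_triconnected_two_terminals[OF min joins_in_edgs[OF e1]] .
    then obtain t where "t \<in> Q" "t \<noteq> v" by blast
    with \<open>v \<in> Q\<close> QG not_triconnected_from_v show False
      by (auto simp: Q_triconnected_def)
  qed
  have "\<not> Q_triconnected (del_edge contracted e) Q" if "e \<in> edgs contracted" for e
    using that min edge_subdivision.Q_triconnected_subdivided[OF edge_subdivision_del_edge]
    by (auto simp: minimal_Q_triconnected_def)
  moreover have "\<not> Q_triconnected (del_vertex contracted x) Q" if "x \<in> verts contracted" for x
    using that min edge_subdivision.Q_triconnected_subdivided[OF edge_subdivision_del_vertex]
    by (auto simp: minimal_Q_triconnected_def)
  ultimately show ?thesis
    using Q_triconnected_contracted[OF QG vQ] by (simp add: minimal_Q_triconnected_def)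
qed

end

lemma contract_step_minimal_Q_triconnected:
  assumes fin: "finite (edgs G)" and min: "minimal_Q_triconnected G Q" and step: "contract_step G G'"
  shows "finite (edgs G') \<and> minimal_Q_triconnected G' Q"
proof -
  from step obtain v u w e1 e2 where "v \<in> verts G" "degree G v = 2" "e1 \<noteq> e2" "u \<noteq> v" "w \<noteq> v"
    "joins G e1 v u" "joins G e2 v w"
    and G': "G' = \<lparr>verts = verts G - {v}, edgs = edgs G - {e2}, ends = (ends G)(e1 := (u, w))\<rparr>"
    unfolding contract_step_def by blast
  with fin interpret degree_two_vertex G v u w e1 e2
    by unfold_locales
  from G' have "G' = contracted"
    by (simp add: contracted_def)
  with fin min show ?thesis
    using minimal_Q_triconnected_contracted by simp
qed

theorem lemma4:
  fixes H H' :: "('v, 'e) mgraph" and Q :: "'v set"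
  assumes "wf_mgraph H"
    and "simple_mgraph H"
    and "minimal_Q_triconnected H Q"
    and "contracted_version H H'"
  shows "minimal_Q_triconnected H' Q"
proof -
  from assms(4) have "contract_step\<^sup>*\<^sup>* H H'"
    by (simp add: contracted_version_def)
  then have "finite (edgs H') \<and> minimal_Q_triconnected H' Q"
  proof (induction rule: rtranclp_induct)
    case base
    with assms(1,3) show ?case by (simp add: wf_mgraph_def)
  next
    case (step G G')
    then show ?case using contract_step_minimal_Q_triconnected by blast
  qed
  then show ?thesis ..
qed

end
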